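(* Let $\lambda$ be a partition with $d$ distinct part sizes and parameters $(h_1,\dots,h_d)$, $(v_1,\dots,v_d)$. Writing $[i,j]^+=[i+1,j-1]$ and $[i,j]^-=[i-1,j+1]$, we have for $0\le s\le d$ and $1\le r\le d$: \[ \alpha_s=\prod_{i=1}^s\frac{[h_{i,s},v_{i+1,s}]}{[h_{i,s},v_{i,s}]}\prod_{i=s+1}^d\frac{[h_{s+1,i-1},v_{s+1,i}]}{[h_{s+1,i},v_{s+1,i}]},\qquad \overline{\alpha}_s=\prod_{i=1}^s\frac{[h_{i,s},v_{i+1,s}]^-}{[h_{i,s},v_{i,s}]^-}\prod_{i=s+1}^d\frac{[h_{s+1,i-1},v_{s+1,i}]^+}{[h_{s+1,i},v_{s+1,i}]^+}, \] \[ \beta_r=\prod_{i=1}^{r-1}\frac{[h_{i,r-1},v_{i,r}]^+}{[h_{i,r-1},v_{i+1,r}]^+}\cdot\frac{[0,v_r]^+}{[0,1]^+}\frac{[h_r,0]^-}{[1,0]^-}\cdot\prod_{i=r+1}^d\frac{[h_{r,i},v_{r+1,i}]^-}{[h_{r,i-1},v_{r+1,i}]^-}, \] \[ \overline{\beta}_r=\prod_{i=1}^{r-1}\frac{[h_{i,r-1},v_{i,r}]}{[h_{i,r-1},v_{i+1,r}]}\cdot\frac{[0,v_r]}{[0,1]}\frac{[h_r,0]}{[1,0]}\cdot\prod_{i=r+1}^d\frac{[h_{r,i},v_{r+1,i}]}{[h_{r,i-1},v_{r+1,i}]}, \] \[ \gamma_{r,s}=\begin{cases}\gamma'_{r,s}&\text{if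 }0<r\le s,\\ \gamma'_{r,s}\,q^{-1-2h_{s+1,r-1}}t^{1-2v_{s+1,r}}&\text{if }r>s,\end{cases}\qquad \gamma'_{r,s}=\begin{cases}\dfrac{[h_{r,s},v_{r+1,s}]\,[h_{r,s},v_{r+1,s}]^-}{[0,1][1,0]}&\text{if }0<r\le s,\\[2mm] \dfrac{[h_{s+1,r-1},v_{s+1,r}]\,[h_{s+1,r-1},v_{s+1,r}]^+}{[0,1][1,0]}&\text{if }r>s.\end{cases} \] Consequently, \[ p_{r,s}=\begin{cases}t^{v_{1,s}}\alpha_s&r=0,\\ \tau_{r,s}\dfrac{\alpha_s\beta_r}{\gamma'_{r,s}}&r>0,\end{cases}\qquad \overline{p}_{r,s}=\begin{cases}t^{v_{1,s}}\overline{\alpha}_s&r=0,\\ \tau_{r,s}\dfrac{\overline{\alpha}_s\overline{\beta}_r}{\gamma'_{r,s}}&r>0,\end{cases} \] where $\tau_{r,s}=t^{v_{r+1,s}}$ if $0<r\le s$ and $\tau_{r,s}=q^{1+2h_{s+1,r-1}}t^{-1+v_{s+1,r}}$ if $r>s$.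
   Context: Partitions are Young diagrams in French convention (cells $(x,y)\in\mathbb{Z}_{>0}^2$, $x\le\lambda_y$), $\lambda'$ the conjugate; for $c=(x,y)\in\lambda$, $a_\lambda(c)=\lambda_y-x$, $\ell_\lambda(c)=\lambda'_x-y$; $n(\kappa)=\sum_{c\in\kappa}\ell_\kappa(c)$, $n'(\kappa)=\sum_{c\in\kappa}a_\kappa(c)$, $n(\rho/\kappa)=n(\rho)-n(\kappa)$, $n'(\rho/\kappa)=n'(\rho)-n'(\kappa)$. For $\kappa\subseteq\rho$, $\mathcal{R}_{\rho/\kappa}$ (resp. $\mathcal{C}_{\rho/\kappa}$): cells of $\kappa$ in a row (resp. column) containing a cell of $\rho/\kappa$. $[i,j]=1-q^it^j$. For $\kappa\lessdot\rho$ (one-cell difference): $\alpha_{\rho/\kappa}=\prod_{c\in\mathcal{R}_{\rho/\kappa}}\frac{[a_\kappa(c),\ell_\kappa(c)+1]}{[a_\rho(c),\ell_\rho(c)+1]}\prod_{c\in\mathcal{C}_{\rho/\kappa}}\frac{[a_\kappa(c)+1,\ell_\kappa(c)]}{[a_\rho(c)+1,\ell_\rho(c)]}$, $\overline{\alpha}_{\rho/\kappa}=\prod_{c\in\mathcal{R}_{\rho/\kappa}}\frac{[a_\kappa(c)+1,\ell_\kappa(c)]}{[a_\rho(c)+1,\ell_\rho(c)]}\prod_{c\in\mathcal{C}_{\rho/\kappa}}\frac{[a_\kappa(c),\ell_\kappa(c)+1]}{[a_\rho(c),\ell_\rho(c)+1]}$, $\beta=1/\alpha$, $\overline{\beta}=1/\overline{\alpha}$.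 For $\mu\lessdot\lambda\lessdot\nu$, with $A=n'(\lambda/\mu)-n'(\nu/\lambda)$, $B=n(\nu/\lambda)-n(\lambda/\mu)$: $\gamma_{\nu/\lambda/\mu}=\frac{(1-q^At^B)(1-q^{A+1}t^{B-1})}{(1-q)(1-t)}$. Probabilities: $\mathcal{P}_\lambda(\lambda\rightarrow\nu)=t^{n(\nu/\lambda)}\alpha_{\nu/\lambda}$, $\overline{\mathcal{P}}_\lambda(\lambda\leftarrow\nu)=t^{n(\nu/\lambda)}\overline{\alpha}_{\nu/\lambda}$, and for $\mu\lessdot\lambda$: $\mathcal{P}_\lambda(\mu\rightarrow\nu)=t^{B-1}\alpha_{\nu/\lambda}\beta_{\lambda/\mu}/\gamma_{\nu/\lambda/\mu}$, $\overline{\mathcal{P}}_\lambda(\mu\leftarrow\nu)=t^{B-1}\overline{\alpha}_{\nu/\lambda}\overline{\beta}_{\lambda/\mu}/\gamma_{\nu/\lambda/\mu}$. Parameters: if $\lambda$ has distinct part sizes $u_1>\dots>u_d>0$, let $v_i$ be the multiplicity of $u_i$ and $h_i=u_i-u_{i+1}$ ($u_{d+1}=0$). Set $h_{i,j}=h_i+\dots+h_j$, $v_{i,j}=v_i+\dots+v_j$ for $i\le j$ and $h_{i,j}=v_{i,j}=0$ for $i>j$. For $0\le s\le d$, $\lambda^{(+s)}$ is obtained from $\lambda$ by adding a cell in row $v_{1,s}+1$; $\lambda^{(-0)}=\lambda$, and for $1\le r\le d$, $\lambda^{(-r)}$ is obtained by removing a cell from row $v_{1,r}$. Define $\alpha_s=\alpha_{\lambda^{(+s)}/\lambda}$,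 $\overline{\alpha}_s=\overline{\alpha}_{\lambda^{(+s)}/\lambda}$, $\beta_r=\beta_{\lambda/\lambda^{(-r)}}$, $\overline{\beta}_r=\overline{\beta}_{\lambda/\lambda^{(-r)}}$, $\gamma_{r,s}=\gamma_{\lambda^{(+s)}/\lambda/\lambda^{(-r)}}$, $p_{r,s}=\mathcal{P}_\lambda(\lambda^{(-r)}\rightarrow\lambda^{(+s)})$, $\overline{p}_{r,s}=\overline{\mathcal{P}}_\lambda(\lambda^{(-r)}\leftarrow\lambda^{(+s)})$. *)

theory Defs
  imports Main
begin

section \<open>Partitions as weakly decreasing lists of positive parts (French convention)\<close>

definition row :: "nat list \<Rightarrow> nat \<Rightarrow> nat" where
  "row lam y = (if 1 \<le> y \<and> y \<le> length lam then lam ! (y - 1) else 0)"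

definition is_partition :: "nat list \<Rightarrow> bool" where
  "is_partition lam \<longleftrightarrow> sorted_wrt (\<ge>) lam \<and> (\<forall>x\<in>set lam. 0 < x)"

definition cells :: "nat list \<Rightarrow> (nat \<times> nat) set" where
  "cells lam = {(x, y). 1 \<le> y \<and> 1 \<le> x \<and> x \<le> row lam y}"

definition conjugate :: "nat list \<Rightarrow> nat \<Rightarrow> nat" where
  "conjugate lam x = card {y. 1 \<le> y \<and> x \<le> row lam y}"

definition arm :: "nat list \<Rightarrow> nat \<times> nat \<Rightarrow> nat" where
  "arm lam c = row lam (snd c) - fst c"

definition leg :: "nat list \<Rightarrow> nat \<times> nat \<Rightarrow> nat" where
  "leg lam c = conjugate lam (fst c) - snd c"

definition nn :: "nat list \<Rightarrow> nat" where
  "nn lam = (\<Sum>c\<in>cells lam. leg lam c)"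

definition nn' :: "nat list \<Rightarrow> nat" where
  "nn' lam = (\<Sum>c\<in>cells lam. arm lam c)"

definition rowsR :: "nat list \<Rightarrow> nat list \<Rightarrow> (nat \<times> nat) set" where
  "rowsR rho kap = {c \<in> cells kap. \<exists>c'\<in>cells rho - cells kap. snd c' = snd c}"

definition colsC :: "nat list \<Rightarrow> nat list \<Rightarrow> (nat \<times> nat) set" where
  "colsC rho kap = {c \<in> cells kap. \<exists>c'\<in>cells rho - cells kap. fst c' = fst c}"

definition br :: "'a::field \<Rightarrow> 'a \<Rightarrow> int \<Rightarrow> int \<Rightarrow> 'a" where
  "br q t i j = 1 - q powi i * t powi j"

definition brp :: "'a::field \<Rightarrow> 'a \<Rightarrow> int \<Rightarrow> int \<Rightarrow> 'a" where
  "brp q t i j = br q t (i + 1) (j - 1)"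

definition brm :: "'a::field \<Rightarrow> 'a \<Rightarrow> int \<Rightarrow> int \<Rightarrow> 'a" where
  "brm q t i j = br q t (i - 1) (j + 1)"

definition alpha :: "'a::field \<Rightarrow> 'a \<Rightarrow> nat list \<Rightarrow> nat list \<Rightarrow> 'a" where
  "alpha q t rho kap =
     (\<Prod>c\<in>rowsR rho kap. br q t (int (arm kap c)) (int (leg kap c) + 1)
                        / br q t (int (arm rho c)) (int (leg rho c) + 1)) *
     (\<Prod>c\<in>colsC rho kap. br q t (int (arm kap c) + 1) (int (leg kap c))
                        / br q t (int (arm rho c) + 1) (int (leg rho c)))"

definition alphabar :: "'a::field \<Rightarrow> 'a \<Rightarrow> nat list \<Rightarrow> nat list \<Rightarrow> 'a" where
  "alphabar q t rho kap =
     (\<Prod>c\<in>rowsR rho kap. br q t (int (arm kap c) + 1) (int (leg kap c))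
                        / br q t (int (arm rho c) + 1) (int (leg rho c))) *
     (\<Prod>c\<in>colsC rho kap. br q t (int (arm kap c)) (int (leg kap c) + 1)
                        / br q t (int (arm rho c)) (int (leg rho c) + 1))"

definition beta :: "'a::field \<Rightarrow> 'a \<Rightarrow> nat list \<Rightarrow> nat list \<Rightarrow> 'a" where
  "beta q t rho kap = 1 / alpha q t rho kap"

definition betabar :: "'a::field \<Rightarrow> 'a \<Rightarrow> nat list \<Rightarrow> nat list \<Rightarrow> 'a" where
  "betabar q t rho kap = 1 / alphabar q t rho kap"

text \<open>For mu <. lam <. nu: A = n'(lam/mu) - n'(nu/lam), B = n(nu/lam) - n(lam/mu).\<close>
definition gA :: "nat list \<Rightarrow> nat list \<Rightarrow> nat list \<Rightarrow> int" where
  "gA nu lam mu = (int (nn' lam) - int (nn' mu)) - (int (nn' nu) - int (nn' lam))"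

definition gB :: "nat list \<Rightarrow> nat list \<Rightarrow> nat list \<Rightarrow> int" where
  "gB nu lam mu = (int (nn nu) - int (nn lam)) - (int (nn lam) - int (nn mu))"

definition gamma :: "'a::field \<Rightarrow> 'a \<Rightarrow> nat list \<Rightarrow> nat list \<Rightarrow> nat list \<Rightarrow> 'a" where
  "gamma q t nu lam mu =
     (1 - q powi gA nu lam mu * t powi gB nu lam mu) *
     (1 - q powi (gA nu lam mu + 1) * t powi (gB nu lam mu - 1)) / ((1 - q) * (1 - t))"

definition Pup0 :: "'a::field \<Rightarrow> 'a \<Rightarrow> nat list \<Rightarrow> nat list \<Rightarrow> 'a" where
  "Pup0 q t lam nu = t powi (int (nn nu) - int (nn lam)) * alpha q t nu lam"

definition Pbar0 :: "'a::field \<Rightarrow> 'a \<Rightarrow> nat list \<Rightarrow> nat list \<Rightarrow> 'a" where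
  "Pbar0 q t lam nu = t powi (int (nn nu) - int (nn lam)) * alphabar q t nu lam"

definition Pup :: "'a::field \<Rightarrow> 'a \<Rightarrow> nat list \<Rightarrow> nat list \<Rightarrow> nat list \<Rightarrow> 'a" where
  "Pup q t lam mu nu =
     t powi (gB nu lam mu - 1) * alpha q t nu lam * beta q t lam mu / gamma q t nu lam mu"

definition Pbar :: "'a::field \<Rightarrow> 'a \<Rightarrow> nat list \<Rightarrow> nat list \<Rightarrow> nat list \<Rightarrow> 'a" where
  "Pbar q t lam mu nu =
     t powi (gB nu lam mu - 1) * alphabar q t nu lam * betabar q t lam mu / gamma q t nu lam mu"

text \<open>Distinct part sizes u_1 > ... > u_d > 0, with u_{d+1} = 0.\<close>
definition nd :: "nat list \<Rightarrow> nat" where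
  "nd lam = card (set lam)"

definition uu :: "nat list \<Rightarrow> nat \<Rightarrow> nat" where
  "uu lam i = (if 1 \<le> i \<and> i \<le> nd lam then rev (sorted_list_of_set (set lam)) ! (i - 1) else 0)"

definition vv :: "nat list \<Rightarrow> nat \<Rightarrow> nat" where
  "vv lam i = (if 1 \<le> i \<and> i \<le> nd lam then count_list lam (uu lam i) else 0)"

definition hh :: "nat list \<Rightarrow> nat \<Rightarrow> nat" where
  "hh lam i = (if 1 \<le> i \<and> i \<le> nd lam then uu lam i - uu lam (i + 1) else 0)"

text \<open>h_{i,j} and v_{i,j} (zero when i > j).\<close>
definition hs :: "nat list \<Rightarrow> nat \<Rightarrow> nat \<Rightarrow> nat" where
  "hs lam i j = (\<Sum>k=i..j. hh lam k)"

definition vs :: "nat list \<Rightarrow> nat \<Rightarrow> nat \<Rightarrow> nat" where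
  "vs lam i j = (\<Sum>k=i..j. vv lam k)"

definition hsi :: "nat list \<Rightarrow> nat \<Rightarrow> nat \<Rightarrow> int" where "hsi lam i j = int (hs lam i j)"
definition vsi :: "nat list \<Rightarrow> nat \<Rightarrow> nat \<Rightarrow> int" where "vsi lam i j = int (vs lam i j)"
definition hhi :: "nat list \<Rightarrow> nat \<Rightarrow> int" where "hhi lam i = int (hh lam i)"

definition add_cell :: "nat list \<Rightarrow> nat \<Rightarrow> nat list" where
  "add_cell lam y = (if y \<le> length lam then lam[y - 1 := lam ! (y - 1) + 1] else lam @ [1])"

definition rem_cell :: "nat list \<Rightarrow> nat \<Rightarrow> nat list" where
  "rem_cell lam y = filter (\<lambda>x. 0 < x) (lam[y - 1 := lam ! (y - 1) - 1])"

definition lplus :: "nat list \<Rightarrow> nat \<Rightarrow> nat list" where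
  "lplus lam s = add_cell lam (vs lam 1 s + 1)"

definition lminus :: "nat list \<Rightarrow> nat \<Rightarrow> nat list" where
  "lminus lam r = (if r = 0 then lam else rem_cell lam (vs lam 1 r))"

definition alpha_s where "alpha_s q t lam s = alpha q t (lplus lam s) lam"
definition alphabar_s where "alphabar_s q t lam s = alphabar q t (lplus lam s) lam"
definition beta_r where "beta_r q t lam r = beta q t lam (lminus lam r)"
definition betabar_r where "betabar_r q t lam r = betabar q t lam (lminus lam r)"
definition gamma_rs where "gamma_rs q t lam r s = gamma q t (lplus lam s) lam (lminus lam r)"

definition p_rs :: "'a::field \<Rightarrow> 'a \<Rightarrow> nat list \<Rightarrow> nat \<Rightarrow> nat \<Rightarrow> 'a" where
  "p_rs q t lam r s =
     (if r = 0 then Pup0 q t lam (lplus lam s) else Pup q t lam (lminus lam r) (lplus lam s))"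

definition pbar_rs :: "'a::field \<Rightarrow> 'a \<Rightarrow> nat list \<Rightarrow> nat \<Rightarrow> nat \<Rightarrow> 'a" where
  "pbar_rs q t lam r s =
     (if r = 0 then Pbar0 q t lam (lplus lam s) else Pbar q t lam (lminus lam r) (lplus lam s))"

definition gammap :: "'a::field \<Rightarrow> 'a \<Rightarrow> nat list \<Rightarrow> nat \<Rightarrow> nat \<Rightarrow> 'a" where
  "gammap q t lam r s =
     (if 0 < r \<and> r \<le> s then
        br q t (hsi lam r s) (vsi lam (r + 1) s) * brm q t (hsi lam r s) (vsi lam (r + 1) s)
          / (br q t 0 1 * br q t 1 0)
      else
        br q t (hsi lam (s + 1) (r - 1)) (vsi lam (s + 1) r)
          * brp q t (hsi lam (s + 1) (r - 1)) (vsi lam (s + 1) r)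
          / (br q t 0 1 * br q t 1 0))"

definition tau :: "'a::field \<Rightarrow> 'a \<Rightarrow> nat list \<Rightarrow> nat \<Rightarrow> nat \<Rightarrow> 'a" where
  "tau q t lam r s =
     (if 0 < r \<and> r \<le> s then t powi (vsi lam (r + 1) s)
      else q powi (1 + 2 * (hsi lam (s + 1) (r - 1))) * t powi (-1 + (vsi lam (s + 1) r)))"

end

theory Submission
  imports Defs
begin

(* Adding a cell in row y0 and column x0 only changes the arms of the other cells of row y0 and
   the legs of the other cells of column x0, so alpha and alphabar are products of ratios of
   brackets over that row and that column.  Along the row the legs are constant on each block of
   columns of equal height, and along the column the arms are constant on each block of rows of
   equal length; within a block the ratios telescope, leaving one factor per block.  For
   lambda^(+s) and lambda^(-r) the block boundaries are the part sizes u_i and the row counts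
   v_{1,i}, which turns the surviving factors into the brackets in h_{i,j} and v_{i,j}.  The same
   cell count gives n and n' of lambda^(+s) and lambda^(-r), hence gamma; for r > s both of its
   factors have negative exponents and are reflected by [-a,-b] = -q^(-a) t^(-b) [a,b]. *)

lemma finite_cells: "finite (cells kap)"
proof (rule finite_subset)
  show "cells kap \<subseteq> {..sum_list kap} \<times> {..length kap}"
    by (auto simp: cells_def row_def split: if_splits
        intro!: member_le_sum_list elim!: order.trans)
qed auto

lemma prod_telescope_greaterThanAtMost:
  fixes f :: "nat \<Rightarrow> 'a::field"
  assumes "a \<le> b" "\<And>x. a \<le> x \<Longrightarrow> x \<le> b \<Longrightarrow> f x \<noteq> 0"
  shows "(\<Prod>x\<in>{a<..b}. f x / f (x - 1)) = f b / f a"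
  using prod_telescope''[of a b f] assms by (simp add: atLeastSucAtMost_greaterThanAtMost)

lemma prod_greaterThanAtMost_split:
  "(a::nat) \<le> b \<Longrightarrow> b \<le> c \<Longrightarrow> prod g {a<..c} = prod g {a<..b} * prod g {b<..c}"
  by (simp add: prod.union_disjoint[symmetric] ivl_disj_int ivl_disj_un)

lemma prod_telescope_blocks_antimono:
  fixes e :: "nat \<Rightarrow> nat" and \<phi> :: "nat \<Rightarrow> nat \<Rightarrow> 'a::field"
  assumes "j \<le> Suc k"
    and "\<And>i. j \<le> i \<Longrightarrow> i \<le> k \<Longrightarrow> e (Suc i) \<le> e i"
    and "\<And>i x. j \<le> i \<Longrightarrow> i \<le> k \<Longrightarrow> e (Suc i) \<le> x \<Longrightarrow> x \<le> e i \<Longrightarrow>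
      \<phi> i x \<noteq> 0"
    and "\<And>i x. j \<le> i \<Longrightarrow> i \<le> k \<Longrightarrow> e (Suc i) < x \<Longrightarrow> x \<le> e i \<Longrightarrow>
      g x = \<phi> i x / \<phi> i (x - 1)"
  shows "(\<Prod>x\<in>{e (Suc k)<..e j}. g x) = (\<Prod>i=j..k. \<phi> i (e i) / \<phi> i (e (Suc i)))"
  using assms
proof (induction k)
  case 0
  then show ?case
    using prod_telescope_greaterThanAtMost[of "e 1" "e 0" "\<phi> 0"]
    by (cases j) (auto intro: prod.cong)
next
  case (Suc k)
  note antimono = Suc.prems(2) and nonzero = Suc.prems(3) and blocks = Suc.prems(4)
  show ?case
  proof (cases "j = Suc (Suc k)")
    case False
    with Suc.prems have j: "j \<le> Suc k" by simp
    have "e (Suc k) \<le> e j"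
      by (rule lift_Suc_antimono_le_ivl[where f = e and N = "{j..<Suc k}"]) (use antimono j in auto)
    then have "(\<Prod>x\<in>{e (Suc (Suc k))<..e j}. g x)
        = (\<Prod>x\<in>{e (Suc (Suc k))<..e (Suc k)}. g x) * (\<Prod>x\<in>{e (Suc k)<..e j}. g x)"
      using antimono[of "Suc k"] j by (intro prod_greaterThanAtMost_split) auto
    also have "(\<Prod>x\<in>{e (Suc (Suc k))<..e (Suc k)}. g x)
        = \<phi> (Suc k) (e (Suc k)) / \<phi> (Suc k) (e (Suc (Suc k)))"
      using antimono[of "Suc k"] nonzero[of "Suc k"] blocks[of "Suc k"] j
      by (subst prod_telescope_greaterThanAtMost[symmetric]) (auto intro: prod.cong)
    also have "(\<Prod>x\<in>{e (Suc k)<..e j}. g x) = (\<Prod>i=j..k. \<phi> i (e i) / \<phi> i (e (Suc i)))"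
      using j antimono nonzero blocks by (intro Suc.IH) auto
    finally show ?thesis
      using j by (simp add: mult.commute)
  qed simp
qed

lemma prod_telescope_blocks_mono:
  fixes e :: "nat \<Rightarrow> nat" and \<phi> :: "nat \<Rightarrow> nat \<Rightarrow> 'a::field"
  assumes "1 \<le> j" "j \<le> Suc k"
    and "\<And>i. j \<le> i \<Longrightarrow> i \<le> k \<Longrightarrow> e (i - 1) \<le> e i"
    and "\<And>i x. j \<le> i \<Longrightarrow> i \<le> k \<Longrightarrow> e (i - 1) \<le> x \<Longrightarrow> x \<le> e i \<Longrightarrow>
      \<phi> i x \<noteq> 0"
    and "\<And>i x. j \<le> i \<Longrightarrow> i \<le> k \<Longrightarrow> e (i - 1) < x \<Longrightarrow> x \<le> e i \<Longrightarrow>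
      g x = \<phi> i x / \<phi> i (x - 1)"
  shows "(\<Prod>x\<in>{e (j - 1)<..e k}. g x) = (\<Prod>i=j..k. \<phi> i (e i) / \<phi> i (e (i - 1)))"
  using assms
proof (induction k)
  case 0
  then show ?case by simp
next
  case (Suc k)
  note mono = Suc.prems(3) and nonzero = Suc.prems(4) and blocks = Suc.prems(5)
  show ?case
  proof (cases "j = Suc (Suc k)")
    case False
    with Suc.prems have j: "1 \<le> j" "j \<le> Suc k" by simp_all
    have "e (j - 1) \<le> e k"
      by (rule lift_Suc_mono_le_ivl[where f = e and N = "{j - 1..<k}"])
         (use mono[of "Suc _"] j in auto)
    then have "(\<Prod>x\<in>{e (j - 1)<..e (Suc k)}. g x)
        = (\<Prod>x\<in>{e (j - 1)<..e k}. g x) * (\<Prod>x\<in>{e k<..e (Suc k)}. g x)"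
      using mono[of "Suc k"] j by (intro prod_greaterThanAtMost_split) auto
    also have "(\<Prod>x\<in>{e k<..e (Suc k)}. g x) = \<phi> (Suc k) (e (Suc k)) / \<phi> (Suc k) (e k)"
      using mono[of "Suc k"] nonzero[of "Suc k"] blocks[of "Suc k"] j
      by (subst prod_telescope_greaterThanAtMost[symmetric]) (auto intro: prod.cong)
    also have "(\<Prod>x\<in>{e (j - 1)<..e k}. g x) = (\<Prod>i=j..k. \<phi> i (e i) / \<phi> i (e (i - 1)))"
      using j mono nonzero blocks by (intro Suc.IH) auto
    finally show ?thesis
      using j by (simp add: mult.commute)
  qed simp
qed

definition alpha_gen ::
    "(int \<Rightarrow> int \<Rightarrow> 'a::field) \<Rightarrow> (int \<Rightarrow> int \<Rightarrow> 'a) \<Rightarrow> nat list \<Rightarrow> nat list \<Rightarrow> 'a" where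
  "alpha_gen F G rho kap =
     (\<Prod>c\<in>rowsR rho kap. F (int (arm kap c)) (int (leg kap c))
                        / F (int (arm rho c)) (int (leg rho c))) *
     (\<Prod>c\<in>colsC rho kap. G (int (arm kap c)) (int (leg kap c))
                        / G (int (arm rho c)) (int (leg rho c)))"

lemma alpha_eq_alpha_gen:
  "alpha q t rho kap = alpha_gen (\<lambda>a l. br q t a (l + 1)) (\<lambda>a l. br q t (a + 1) l) rho kap"
  by (simp add: alpha_def alpha_gen_def)

lemma alphabar_eq_alpha_gen:
  "alphabar q t rho kap = alpha_gen (\<lambda>a l. br q t (a + 1) l) (\<lambda>a l. br q t a (l + 1)) rho kap"
  by (simp add: alphabar_def alpha_gen_def)

locale one_cell_extension =
  fixes kap rho :: "nat list" and x0 y0 :: nat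
  assumes row_rho: "\<And>y. row rho y = row kap y + (if y = y0 then 1 else 0)"
    and y0_pos: "1 \<le> y0"
    and x0_eq: "x0 = row kap y0 + 1"
    and x0_le_row_iff: "\<And>y. 1 \<le> y \<Longrightarrow> x0 \<le> row kap y \<longleftrightarrow> y < y0"
begin

lemma conjugate_kap_x0: "conjugate kap x0 = y0 - 1"
proof -
  have "{y. 1 \<le> y \<and> x0 \<le> row kap y} = {1..<y0}"
    using x0_le_row_iff by auto
  then show ?thesis by (simp add: conjugate_def)
qed

lemma conjugate_rho_x0: "conjugate rho x0 = y0"
proof -
  have "{y. 1 \<le> y \<and> x0 \<le> row rho y} = {1..y0}"
    using x0_le_row_iff row_rho x0_eq y0_pos by (auto simp: le_Suc_eq)
  then show ?thesis by (simp add: conjugate_def)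
qed

lemma conjugate_rho: "x \<noteq> x0 \<Longrightarrow> conjugate rho x = conjugate kap x"
proof -
  assume "x \<noteq> x0"
  then have "{y. 1 \<le> y \<and> x \<le> row rho y} = {y. 1 \<le> y \<and> x \<le> row kap y}"
    using row_rho x0_eq by (auto split: if_splits)
  then show ?thesis by (simp add: conjugate_def)
qed

lemma cells_rho: "cells rho = insert (x0, y0) (cells kap)"
  and new_cell_notin: "(x0, y0) \<notin> cells kap"
  using row_rho x0_eq y0_pos by (auto simp: cells_def split: if_splits)

lemma cells_diff: "cells rho - cells kap = {(x0, y0)}"
  using cells_rho new_cell_notin by auto

lemma rowsR_eq: "rowsR rho kap = (\<lambda>x. (x, y0)) ` {0<..x0 - 1}"
  unfolding rowsR_def cells_diff using x0_eq y0_pos by (auto simp: cells_def)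

lemma colsC_eq: "colsC rho kap = (\<lambda>y. (x0, y)) ` {0<..y0 - 1}"
  unfolding colsC_def cells_diff using x0_le_row_iff y0_pos x0_eq by (auto simp: cells_def)

lemma leg_rho: "c \<in> cells kap \<Longrightarrow> leg rho c = leg kap c + (if fst c = x0 then 1 else 0)"
  using x0_le_row_iff conjugate_rho_x0 conjugate_kap_x0
  by (cases c) (auto simp: leg_def cells_def conjugate_rho)

lemma arm_rho: "c \<in> cells kap \<Longrightarrow> arm rho c = arm kap c + (if snd c = y0 then 1 else 0)"
  using row_rho x0_eq by (auto simp: arm_def cells_def)

lemma nn_rho: "nn rho = nn kap + (y0 - 1)"
proof -
  have "nn rho = leg rho (x0, y0) + (\<Sum>c\<in>cells kap. leg rho c)"
    unfolding nn_def cells_rho using finite_cells new_cell_notin by simp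
  also have "leg rho (x0, y0) = 0"
    using conjugate_rho_x0 by (simp add: leg_def)
  also have "(\<Sum>c\<in>cells kap. leg rho c) = nn kap + card {c\<in>cells kap. fst c = x0}"
    by (simp add: leg_rho nn_def sum.distrib sum.If_cases finite_cells Int_def conj_commute)
  also have "{c\<in>cells kap. fst c = x0} = colsC rho kap"
    unfolding colsC_def cells_diff by auto
  also have "card \<dots> = y0 - 1"
    unfolding colsC_eq by (simp add: card_image inj_on_def)
  finally show ?thesis by simp
qed

lemma nn'_rho: "nn' rho = nn' kap + (x0 - 1)"
proof -
  have "nn' rho = arm rho (x0, y0) + (\<Sum>c\<in>cells kap. arm rho c)"
    unfolding nn'_def cells_rho using finite_cells new_cell_notin by simp
  also have "arm rho (x0, y0) = 0"
    using row_rho x0_eq by (simp add: arm_def)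
  also have "(\<Sum>c\<in>cells kap. arm rho c) = nn' kap + card {c\<in>cells kap. snd c = y0}"
    by (simp add: arm_rho nn'_def sum.distrib sum.If_cases finite_cells Int_def conj_commute)
  also have "{c\<in>cells kap. snd c = y0} = rowsR rho kap"
    unfolding rowsR_def cells_diff by auto
  also have "card \<dots> = x0 - 1"
    unfolding rowsR_eq by (simp add: card_image inj_on_def)
  finally show ?thesis by simp
qed

lemma alpha_gen_eq:
  "alpha_gen F G rho kap =
    (\<Prod>x\<in>{0<..x0 - 1}. F (int (x0 - 1 - x)) (int (conjugate kap x - y0))
                       / F (int (x0 - x)) (int (conjugate kap x - y0))) *
    (\<Prod>y\<in>{0<..y0 - 1}. G (int (row kap y - x0)) (int (y0 - 1 - y))
                       / G (int (row kap y - x0)) (int (y0 - y)))"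
proof -
  have rows: "(\<Prod>c\<in>rowsR rho kap. F (int (arm kap c)) (int (leg kap c))
                                    / F (int (arm rho c)) (int (leg rho c)))
    = (\<Prod>x\<in>{0<..x0 - 1}. F (int (x0 - 1 - x)) (int (conjugate kap x - y0))
                       / F (int (x0 - x)) (int (conjugate kap x - y0)))"
    unfolding rowsR_eq
    using row_rho x0_eq
    by (subst prod.reindex) (auto simp: inj_on_def arm_def leg_def conjugate_rho intro!: prod.cong)
  have cols: "(\<Prod>c\<in>colsC rho kap. G (int (arm kap c)) (int (leg kap c))
                                    / G (int (arm rho c)) (int (leg rho c)))
    = (\<Prod>y\<in>{0<..y0 - 1}. G (int (row kap y - x0)) (int (y0 - 1 - y))
                       / G (int (row kap y - x0)) (int (y0 - y)))"
    unfolding colsC_eq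
    using row_rho conjugate_rho_x0 conjugate_kap_x0
    by (subst prod.reindex) (auto simp: inj_on_def arm_def leg_def intro!: prod.cong)
  show ?thesis
    unfolding alpha_gen_def rows cols ..
qed

end

lemma row_add_cell:
  "1 \<le> y0 \<Longrightarrow> y0 \<le> length xs + 1 \<Longrightarrow>
    row (add_cell xs y0) y = row xs y + (if y = y0 then 1 else 0)"
  by (cases "y0 \<le> length xs") (auto simp: add_cell_def row_def nth_list_update nth_append)

lemma row_Cons: "row (a # xs) y = (if y = 0 then 0 else if y = 1 then a else row xs (y - 1))"
  by (cases y) (auto simp: row_def nth_Cons')

lemma row_filter_pos: "sorted_wrt (\<ge>) xs \<Longrightarrow> row (filter (\<lambda>x. 0 < x) xs) y = row xs y"
proof (induction xs arbitrary: y)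
  case (Cons a xs)
  show ?case
  proof (cases "0 < a")
    case False
    with Cons.prems have "\<forall>x\<in>set xs. x = 0" by auto
    then have "row xs (y - 1) = 0" and "filter (\<lambda>x. 0 < x) xs = []"
      by (auto simp: row_def filter_empty_conv)
    with False show ?thesis by (simp add: row_Cons row_def[of "[]"])
  qed (use Cons in \<open>simp add: row_Cons\<close>)
qed (simp add: row_def)

lemma sorted_desc_le_nth_iff:
  fixes xs :: "'a::linorder list"
  assumes sorted: "sorted_wrt (\<ge>) xs" and k: "k < length xs"
  shows "a \<le> xs ! k \<longleftrightarrow> k < card {j. j < length xs \<and> a \<le> xs ! j}"
proof -
  let ?S = "{j. j < length xs \<and> a \<le> xs ! j}"
  have down_closed: "j' \<in> ?S" if "j \<in> ?S" "j' \<le> j" for j j'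
    using that sorted_wrt_nth_less[OF sorted, of j' j] by (cases "j' = j") auto
  show ?thesis
  proof
    assume "a \<le> xs ! k"
    then have "{..k} \<subseteq> ?S"
      using down_closed[of k] k by auto
    then show "k < card ?S"
      using card_mono[of ?S "{..k}"] by simp
  next
    assume less: "k < card ?S"
    show "a \<le> xs ! k"
    proof (rule ccontr)
      assume "\<not> a \<le> xs ! k"
      then have "j < k" if "j \<in> ?S" for j
        using down_closed[OF that, of k] k by (cases "k \<le> j") auto
      then have "?S \<subseteq> {..<k}" by auto
      then show False
        using card_mono[of "{..<k}" ?S] less by simp
    qed
  qed
qed

lemma br_nonzero:
  assumes "\<forall>a b :: int. q powi a * t powi b = 1 \<longrightarrow> a = 0 \<and> b = 0" and "i \<noteq> 0 \<or> j \<noteq> 0"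
  shows "br q t i j \<noteq> 0"
  using assms by (auto simp: br_def)

lemma br_uminus:
  fixes q t :: "'a::field"
  assumes "q \<noteq> 0" "t \<noteq> 0"
  shows "br q t (- i) (- j) = - (q powi (- i) * t powi (- j)) * br q t i j"
  using assms by (simp add: br_def power_int_minus field_simps)

lemma vs_0 [simp]: "vs lam i 0 = 0"
  by (simp add: vs_def vv_def)

locale partition_shape =
  fixes lam :: "nat list"
  assumes is_partition: "is_partition lam"
begin

(* U i = u_i, and W i = v_{1,i} is the number of rows of length at least u_i. *)
abbreviation "d \<equiv> nd lam"
abbreviation "U \<equiv> uu lam"
abbreviation "W \<equiv> vs lam 1"

lemma sorted_lam: "sorted_wrt (\<ge>) lam" and parts_pos: "x \<in> set lam \<Longrightarrow> 0 < x"
  using is_partition by (auto simp: is_partition_def)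

lemma length_part_sizes: "length (rev (sorted_list_of_set (set lam))) = d"
  by (simp add: nd_def)

lemma uu_mem: "1 \<le> i \<Longrightarrow> i \<le> d \<Longrightarrow> U i \<in> set lam"
  using nth_mem[of "i - 1" "rev (sorted_list_of_set (set lam))"] length_part_sizes
  by (simp add: uu_def)

lemma uu_pos: "1 \<le> i \<Longrightarrow> i \<le> d \<Longrightarrow> 0 < U i"
  using uu_mem parts_pos by blast

lemma uu_eq_0: "d < i \<Longrightarrow> U i = 0"
  by (simp add: uu_def)

lemma ex_uu_eq_part: "x \<in> set lam \<Longrightarrow> \<exists>i. 1 \<le> i \<and> i \<le> d \<and> U i = x"
proof -
  assume "x \<in> set lam"
  then have "x \<in> set (rev (sorted_list_of_set (set lam)))" by simp
  then obtain k where "k < d" "rev (sorted_list_of_set (set lam)) ! k = x"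
    unfolding in_set_conv_nth length_part_sizes by blast
  then show ?thesis
    by (intro exI[of _ "Suc k"]) (simp add: uu_def)
qed

lemma uu_strict_antimono: "1 \<le> i \<Longrightarrow> i < j \<Longrightarrow> j \<le> d + 1 \<Longrightarrow> U j < U i"
proof -
  assume ij: "1 \<le> i" "i < j" "j \<le> d + 1"
  show ?thesis
  proof (cases "j = d + 1")
    case False
    have "sorted_wrt (>) (rev (sorted_list_of_set (set lam)))"
      by (simp add: sorted_wrt_rev)
    then have "rev (sorted_list_of_set (set lam)) ! (j - 1)
             < rev (sorted_list_of_set (set lam)) ! (i - 1)"
      by (rule sorted_wrt_nth_less) (use ij False length_part_sizes in auto)
    then show ?thesis
      using ij False by (simp add: uu_def)
  qed (use ij uu_eq_0 uu_pos in simp)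
qed

lemma uu_le_iff:
  "1 \<le> i \<Longrightarrow> i \<le> d + 1 \<Longrightarrow> 1 \<le> j \<Longrightarrow> j \<le> d + 1 \<Longrightarrow> U i \<le> U j \<longleftrightarrow> j \<le> i"
  using uu_strict_antimono by (metis le_less not_le)

lemma uu_less_iff:
  "1 \<le> i \<Longrightarrow> i \<le> d + 1 \<Longrightarrow> 1 \<le> j \<Longrightarrow> j \<le> d + 1 \<Longrightarrow> U i < U j \<longleftrightarrow> j < i"
  using uu_le_iff by (meson not_le)

lemma uu_le_part_iff:
  assumes "x \<in> set lam" "1 \<le> i" "i \<le> d"
  shows "U i \<le> x \<longleftrightarrow> (\<exists>j\<in>{1..i}. x = U j)"
proof -
  obtain j where j: "1 \<le> j" "j \<le> d" "U j = x"
    using ex_uu_eq_part assms(1) by blast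
  then have "U i \<le> x \<longleftrightarrow> j \<le> i"
    using uu_le_iff[of i j] assms by simp
  moreover have "(\<exists>j'\<in>{1..i}. x = U j') \<longleftrightarrow> j \<le> i"
  proof
    assume "\<exists>j'\<in>{1..i}. x = U j'"
    then obtain j' where "j' \<in> {1..i}" "U j' \<le> U j"
      using j by auto
    then show "j \<le> i"
      using uu_le_iff[of j' j] j assms by auto
  qed (use j in auto)
  ultimately show ?thesis by simp
qed

lemma vv_pos: "1 \<le> i \<Longrightarrow> i \<le> d \<Longrightarrow> 1 \<le> vv lam i"
  using uu_mem count_list_0_iff by (fastforce simp: vv_def)

lemma vs_Suc: "vs lam i (Suc j) = vs lam i j + (if i \<le> Suc j then vv lam (Suc j) else 0)"
  by (simp add: vs_def)

lemma W_mono: "i \<le> j \<Longrightarrow> W i \<le> W j"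
  unfolding vs_def by (rule sum_mono2) auto

lemma W_strict_mono: "i < j \<Longrightarrow> j \<le> d \<Longrightarrow> W i < W j"
  using W_mono[of i "j - 1"] vs_Suc[of 1 "j - 1"] vv_pos[of j] by (cases j) auto

lemma vv_eq_card:
  "1 \<le> i \<Longrightarrow> i \<le> d \<Longrightarrow> vv lam i = card {k. k < length lam \<and> lam ! k = U i}"
  by (simp add: vv_def count_list_eq_length_filter length_filter_conv_card eq_commute)

lemma W_eq_card:
  "1 \<le> i \<Longrightarrow> i \<le> d \<Longrightarrow> W i = card {k. k < length lam \<and> U i \<le> lam ! k}"
proof -
  assume i: "1 \<le> i" "i \<le> d"
  define rows where "rows j = {k. k < length lam \<and> lam ! k = U j}" for j
  have "U i \<le> lam ! k \<longleftrightarrow> (\<exists>j\<in>{1..i}. lam ! k = U j)" if "k < length lam" for k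
    using uu_le_part_iff[OF nth_mem[OF that] i] .
  then have "card {k. k < length lam \<and> U i \<le> lam ! k} = card (\<Union>j\<in>{1..i}. rows j)"
    unfolding rows_def by (intro arg_cong[where f = card]) blast
  also have "\<dots> = (\<Sum>j=1..i. card (rows j))"
  proof (rule card_UN_disjoint)
    show "\<forall>j\<in>{1..i}. \<forall>j'\<in>{1..i}. j \<noteq> j' \<longrightarrow> rows j \<inter> rows j' = {}"
    proof (intro ballI impI)
      fix j j' assume "j \<in> {1..i}" "j' \<in> {1..i}" "j \<noteq> j'"
      then have "U j \<noteq> U j'"
        using i uu_strict_antimono[of j j'] uu_strict_antimono[of j' j] by (cases "j < j'") auto
      then show "rows j \<inter> rows j' = {}"
        unfolding rows_def by auto
    qed
  qed (auto simp: rows_def)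
  also have "\<dots> = W i"
    unfolding vs_def rows_def using i by (intro sum.cong) (auto simp: vv_eq_card)
  finally show ?thesis ..
qed

lemma uu_le_nth_iff:
  "k < length lam \<Longrightarrow> 1 \<le> i \<Longrightarrow> i \<le> d \<Longrightarrow> U i \<le> lam ! k \<longleftrightarrow> k < W i"
  using sorted_desc_le_nth_iff[OF sorted_lam] W_eq_card by simp

lemma W_nd: "W d = length lam"
proof (cases "d = 0")
  case True
  then show ?thesis by (simp add: nd_def)
next
  case False
  have "U d \<le> lam ! k" if k: "k < length lam" for k
  proof -
    obtain i where "1 \<le> i" "i \<le> d" "U i = lam ! k"
      using ex_uu_eq_part[OF nth_mem[OF k]] by blast
    then show ?thesis
      using uu_le_iff[of d i] False by simp
  qed
  then have "{k. k < length lam \<and> U d \<le> lam ! k} = {..<length lam}"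
    by auto
  then show ?thesis
    using W_eq_card[of d] False by simp
qed

lemma W_le_length: "W i \<le> length lam"
proof (cases "i \<le> d")
  case False
  then have "W i = W d"
    unfolding vs_def by (intro sum.mono_neutral_right) (auto simp: vv_def)
  then show ?thesis using W_nd by simp
qed (use W_mono W_nd in metis)

lemma uu_le_row_iff:
  "1 \<le> y \<Longrightarrow> 1 \<le> i \<Longrightarrow> i \<le> d \<Longrightarrow> U i \<le> row lam y \<longleftrightarrow> y \<le> W i"
  using uu_le_nth_iff[of "y - 1" i] uu_pos[of i] W_le_length[of i]
  by (cases "y \<le> length lam") (auto simp: row_def)

lemma uu_Suc_less_row_iff:
  "1 \<le> y \<Longrightarrow> i \<le> d \<Longrightarrow> U (Suc i) < row lam y \<longleftrightarrow> y \<le> W i"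
proof (cases "y \<le> length lam")
  case True
  assume y: "1 \<le> y" and i: "i \<le> d"
  obtain j where j: "1 \<le> j" "j \<le> d" "U j = row lam y"
    using ex_uu_eq_part[of "row lam y"] y True by (auto simp: row_def)
  have "U (Suc i) < row lam y \<longleftrightarrow> j \<le> i"
    using uu_less_iff[of "Suc i" j] i j by auto
  also have "j \<le> i \<longleftrightarrow> y \<le> W i"
  proof (cases "i = 0")
    case False
    then show ?thesis
      using uu_le_row_iff[OF y, of i] uu_le_iff[of i j] i j by auto
  qed (use j y in auto)
  finally show ?thesis .
qed (use W_le_length[of i] in \<open>auto simp: row_def\<close>)

lemma row_eq_uu:
  "1 \<le> i \<Longrightarrow> i \<le> d \<Longrightarrow> W (i - 1) < y \<Longrightarrow> y \<le> W i \<Longrightarrow> row lam y = U i"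
  using uu_le_row_iff[of y i] uu_Suc_less_row_iff[of y "i - 1"] by simp

lemma conjugate_eq_W:
  "1 \<le> i \<Longrightarrow> i \<le> d \<Longrightarrow> U (Suc i) < x \<Longrightarrow> x \<le> U i \<Longrightarrow> conjugate lam x = W i"
proof -
  assume "1 \<le> i" "i \<le> d" "U (Suc i) < x" "x \<le> U i"
  then have "{y. 1 \<le> y \<and> x \<le> row lam y} = {1..W i}"
    using uu_le_row_iff[of _ i] uu_Suc_less_row_iff[of _ i] by fastforce
  then show ?thesis by (simp add: conjugate_def)
qed

lemma hsi_eq:
  "1 \<le> i \<Longrightarrow> i \<le> Suc j \<Longrightarrow> j \<le> d \<Longrightarrow> hsi lam i j = int (U i) - int (U (Suc j))"
proof (induction j)
  case (Suc j)
  show ?case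
  proof (cases "i = Suc (Suc j)")
    case False
    then have "hsi lam i (Suc j) = hsi lam i j + int (hh lam (Suc j))"
      using Suc.prems by (simp add: hsi_def hs_def)
    moreover have "int (hh lam (Suc j)) = int (U (Suc j)) - int (U (Suc (Suc j)))"
      using Suc.prems uu_strict_antimono[of "Suc j" "Suc (Suc j)"] by (simp add: hh_def)
    ultimately show ?thesis
      using Suc False by simp
  qed (simp add: hsi_def hs_def)
qed (auto simp: hsi_def hs_def)

lemma vsi_eq: "1 \<le> i \<Longrightarrow> i \<le> Suc j \<Longrightarrow> vsi lam i j = int (W j) - int (W (i - 1))"
proof (induction j)
  case (Suc j)
  then show ?case
    using vs_Suc[of i j] vs_Suc[of 1 j] by (cases "i = Suc (Suc j)") (auto simp: vsi_def vs_def)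
qed (auto simp: vsi_def vs_def)

lemma hhi_eq: "1 \<le> i \<Longrightarrow> i \<le> d \<Longrightarrow> hhi lam i = int (U i) - int (U (Suc i))"
  using uu_strict_antimono[of i "Suc i"] by (simp add: hhi_def hh_def)

lemma row_W_Suc: "s \<le> d \<Longrightarrow> row lam (Suc (W s)) = U (Suc s)"
  using row_eq_uu[of "Suc s" "Suc (W s)"] W_strict_mono[of s "Suc s"] W_nd uu_eq_0[of "Suc d"]
  by (cases "s = d") (auto simp: row_def)

lemma one_cell_extension_lplus:
  assumes "s \<le> d"
  shows "one_cell_extension lam (lplus lam s) (Suc (U (Suc s))) (Suc (W s))"
proof
  show "row (lplus lam s) y = row lam y + (if y = Suc (W s) then 1 else 0)" for y
    using row_add_cell[of "Suc (W s)" lam y] W_le_length[of s] by (simp add: lplus_def)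
  show "Suc (U (Suc s)) = row lam (Suc (W s)) + 1"
    using row_W_Suc assms by simp
  show "1 \<le> y \<Longrightarrow> Suc (U (Suc s)) \<le> row lam y \<longleftrightarrow> y < Suc (W s)" for y
    using uu_Suc_less_row_iff[of y s] assms by auto
qed simp

lemma row_lminus:
  assumes r: "1 \<le> r" "r \<le> d"
  shows "row lam y = row (lminus lam r) y + (if y = W r then 1 else 0)"
proof -
  define k where "k = W r - 1"
  have W_r: "1 \<le> W r" "W r \<le> length lam"
    using W_strict_mono[of 0 r] W_le_length[of r] r by auto
  have lam_k: "lam ! k = U r"
    using row_eq_uu[of r "W r"] W_strict_mono[of "r - 1" r] r W_r by (simp add: k_def row_def)
  define xs where "xs = lam[k := lam ! k - 1]"
  have "sorted_wrt (\<ge>) xs"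
    unfolding sorted_wrt_iff_nth_less
  proof (intro allI impI)
    fix i j assume ij: "i < j" "j < length xs"
    have "lam ! j \<le> lam ! i"
      using sorted_wrt_nth_less[OF sorted_lam, of i j] ij by (simp add: xs_def)
    moreover have "lam ! j < U r" if "i = k"
    proof -
      have "\<not> j < W r"
        using ij that W_r by (simp add: k_def)
      then show ?thesis
        using uu_le_nth_iff[of j r] ij r by (simp add: xs_def)
    qed
    ultimately show "xs ! j \<le> xs ! i"
      using ij lam_k by (cases "i = k"; cases "j = k") (auto simp: xs_def)
  qed
  then have "row (lminus lam r) y = row xs y"
    using r by (simp add: lminus_def rem_cell_def xs_def k_def row_filter_pos)
  also have "row xs y = row lam y - (if y = W r then 1 else 0)"
    using W_r by (auto simp: row_def xs_def k_def nth_list_update)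
  finally show ?thesis
    using row_eq_uu[of r "W r"] W_strict_mono[of "r - 1" r] uu_pos[of r] r by auto
qed

lemma one_cell_extension_lminus:
  assumes r: "1 \<le> r" "r \<le> d"
  shows "one_cell_extension (lminus lam r) lam (U r) (W r)"
proof
  show "row lam y = row (lminus lam r) y + (if y = W r then 1 else 0)" for y
    using row_lminus[OF r] .
  show "1 \<le> W r"
    using W_strict_mono[of 0 r] r by auto
  have "row lam (W r) = U r"
    using row_eq_uu[of r "W r"] W_strict_mono[of "r - 1" r] r by simp
  then show "U r = row (lminus lam r) (W r) + 1"
    using row_lminus[OF r, of "W r"] by simp
  show "1 \<le> y \<Longrightarrow> U r \<le> row (lminus lam r) y \<longleftrightarrow> y < W r" for y
    using row_lminus[OF r, of y] uu_le_row_iff[of y r] r \<open>row lam (W r) = U r\<close>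
    by (cases "y = W r") auto
qed

lemma nn_lplus: "s \<le> d \<Longrightarrow> nn (lplus lam s) = nn lam + W s"
  using one_cell_extension.nn_rho[OF one_cell_extension_lplus] by simp

lemma gA_gB_eq:
  assumes r: "1 \<le> r" "r \<le> d" and s: "s \<le> d"
  shows "gA (lplus lam s) lam (lminus lam r) = int (U r) - 1 - int (U (Suc s))"
    and "gB (lplus lam s) lam (lminus lam r) = int (W s) - int (W r) + 1"
proof -
  interpret plus: one_cell_extension lam "lplus lam s" "Suc (U (Suc s))" "Suc (W s)"
    using one_cell_extension_lplus[OF s] .
  interpret minus: one_cell_extension "lminus lam r" lam "U r" "W r"
    using one_cell_extension_lminus[OF r] .
  have "1 \<le> W r" "1 \<le> U r"
    using W_strict_mono[of 0 r] uu_pos[of r] r by auto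
  then show "gA (lplus lam s) lam (lminus lam r) = int (U r) - 1 - int (U (Suc s))"
    and "gB (lplus lam s) lam (lminus lam r) = int (W s) - int (W r) + 1"
    using plus.nn_rho plus.nn'_rho minus.nn_rho minus.nn'_rho by (simp_all add: gA_def gB_def)
qed

lemma prod_leg_ratios_telescope:
  fixes F :: "int \<Rightarrow> int \<Rightarrow> 'a::field"
  assumes F: "\<And>a l. 0 \<le> a \<Longrightarrow> 0 \<le> l \<Longrightarrow> F a l \<noteq> 0"
    and j: "1 \<le> j" "j \<le> Suc d" and c: "U j \<le> c"
    and y0: "\<And>i. j \<le> i \<Longrightarrow> i \<le> d \<Longrightarrow> y0 \<le> W i"
  shows "(\<Prod>x\<in>{0<..U j}. F (int (c - x)) (int (conjugate lam x - y0))
                          / F (int (Suc c - x)) (int (conjugate lam x - y0)))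
       = (\<Prod>i=j..d. F (int c - int (U i)) (int (W i) - int y0)
                   / F (int c - int (U (Suc i))) (int (W i) - int y0))"
proof -
  have anti: "U (Suc i) \<le> U i" and le_c: "U i \<le> c" if "j \<le> i" "i \<le> d" for i
    using uu_le_iff[of "Suc i" i] uu_le_iff[of i j] that j c by simp_all
  have "(\<Prod>x\<in>{U (Suc d)<..U j}. F (int (c - x)) (int (conjugate lam x - y0))
                          / F (int (Suc c - x)) (int (conjugate lam x - y0)))
       = (\<Prod>i=j..d. F (int c - int (U i)) (int (W i) - int y0)
                   / F (int c - int (U (Suc i))) (int (W i) - int y0))"
  proof (rule prod_telescope_blocks_antimono
      [where \<phi> = "\<lambda>i x. F (int c - int x) (int (W i) - int y0)"])
    fix i x assume i: "j \<le> i" "i \<le> d"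
    show "F (int c - int x) (int (W i) - int y0) \<noteq> 0" if "x \<le> U i"
      using F le_c[OF i] y0[OF i] that by simp
    assume x: "U (Suc i) < x" "x \<le> U i"
    then have "conjugate lam x = W i"
      using conjugate_eq_W i j by simp
    then show "F (int (c - x)) (int (conjugate lam x - y0))
                 / F (int (Suc c - x)) (int (conjugate lam x - y0))
      = F (int c - int x) (int (W i) - int y0) / F (int c - int (x - 1)) (int (W i) - int y0)"
      using le_c[OF i] y0[OF i] x by (simp add: of_nat_diff algebra_simps)
  qed (use j anti in auto)
  then show ?thesis
    by (simp add: uu_eq_0)
qed

lemma prod_arm_ratios_telescope:
  fixes G :: "int \<Rightarrow> int \<Rightarrow> 'a::field"
  assumes G: "\<And>a l. 0 \<le> a \<Longrightarrow> 0 \<le> l \<Longrightarrow> G a l \<noteq> 0"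
    and k: "k \<le> d" and c: "W k \<le> c"
    and x0: "\<And>i. 1 \<le> i \<Longrightarrow> i \<le> k \<Longrightarrow> x0 \<le> U i"
  shows "(\<Prod>y\<in>{0<..W k}. G (int (row lam y - x0)) (int (c - y))
                          / G (int (row lam y - x0)) (int (Suc c - y)))
       = (\<Prod>i=1..k. G (int (U i) - int x0) (int c - int (W i))
                   / G (int (U i) - int x0) (int c - int (W (i - 1))))"
proof -
  have le_c: "W i \<le> c" if "i \<le> k" for i
    using W_mono[OF that] c by simp
  have "(\<Prod>y\<in>{W (1 - 1)<..W k}. G (int (row lam y - x0)) (int (c - y))
                          / G (int (row lam y - x0)) (int (Suc c - y)))
       = (\<Prod>i=1..k. G (int (U i) - int x0) (int c - int (W i))
                   / G (int (U i) - int x0) (int c - int (W (i - 1))))"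
  proof (rule prod_telescope_blocks_mono
      [where \<phi> = "\<lambda>i y. G (int (U i) - int x0) (int c - int y)"])
    fix i y assume i: "1 \<le> i" "i \<le> k"
    show "G (int (U i) - int x0) (int c - int y) \<noteq> 0" if "y \<le> W i"
      using G le_c[OF i(2)] x0[OF i] that by simp
    assume y: "W (i - 1) < y" "y \<le> W i"
    then have "row lam y = U i"
      using row_eq_uu i k by simp
    then show "G (int (row lam y - x0)) (int (c - y)) / G (int (row lam y - x0)) (int (Suc c - y))
      = G (int (U i) - int x0) (int c - int y) / G (int (U i) - int x0) (int c - int (y - 1))"
      using le_c[OF i(2)] x0[OF i] y by (simp add: of_nat_diff algebra_simps)
  qed (use W_mono in auto)
  then show ?thesis
    by (simp add:)
qed

lemma alpha_gen_lplus:
  fixes F G :: "int \<Rightarrow> int \<Rightarrow> 'a::field"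
  assumes F: "\<And>a l. 0 \<le> a \<Longrightarrow> 0 \<le> l \<Longrightarrow> F a l \<noteq> 0"
    and G: "\<And>a l. 0 \<le> a \<Longrightarrow> 0 \<le> l \<Longrightarrow> G a l \<noteq> 0" and s: "s \<le> d"
  shows "alpha_gen F G (lplus lam s) lam =
    (\<Prod>i=s+1..d. F (hsi lam (s + 1) (i - 1)) (vsi lam (s + 1) i - 1)
                / F (hsi lam (s + 1) i) (vsi lam (s + 1) i - 1)) *
    (\<Prod>i=1..s. G (hsi lam i s - 1) (vsi lam (i + 1) s) / G (hsi lam i s - 1) (vsi lam i s))"
proof -
  interpret one_cell_extension lam "lplus lam s" "Suc (U (Suc s))" "Suc (W s)"
    using one_cell_extension_lplus[OF s] .
  have rows: "(\<Prod>x\<in>{0<..U (Suc s)}. F (int (U (Suc s) - x)) (int (conjugate lam x - Suc (W s)))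
                          / F (int (Suc (U (Suc s)) - x)) (int (conjugate lam x - Suc (W s))))
    = (\<Prod>i=s+1..d. F (hsi lam (s + 1) (i - 1)) (vsi lam (s + 1) i - 1)
                / F (hsi lam (s + 1) i) (vsi lam (s + 1) i - 1))"
    using s W_strict_mono[of s] hsi_eq[of "Suc s"] vsi_eq[of "Suc s"]
    by (subst prod_leg_ratios_telescope[OF F])
       (auto simp: Suc_le_eq diff_diff_eq add.commute intro!: prod.cong)
  have cols: "(\<Prod>y\<in>{0<..W s}. G (int (row lam y - Suc (U (Suc s)))) (int (W s - y))
                          / G (int (row lam y - Suc (U (Suc s)))) (int (Suc (W s) - y)))
    = (\<Prod>i=1..s. G (hsi lam i s - 1) (vsi lam (i + 1) s) / G (hsi lam i s - 1) (vsi lam i s))"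
    using s uu_strict_antimono[of _ "Suc s"] hsi_eq[of _ s] vsi_eq[of _ s]
    by (subst prod_arm_ratios_telescope[OF G])
       (auto simp: Suc_le_eq diff_diff_eq add.commute intro!: prod.cong)
  show ?thesis
    using alpha_gen_eq[of F G] rows cols by simp
qed

lemma alpha_gen_lminus:
  fixes F G :: "int \<Rightarrow> int \<Rightarrow> 'a::field"
  assumes F: "\<And>a l. 0 \<le> a \<Longrightarrow> 0 \<le> l \<Longrightarrow> F a l \<noteq> 0"
    and G: "\<And>a l. 0 \<le> a \<Longrightarrow> 0 \<le> l \<Longrightarrow> G a l \<noteq> 0" and r: "1 \<le> r" "r \<le> d"
  shows "alpha_gen F G lam (lminus lam r) =
    ((\<Prod>i=r+1..d. F (hsi lam r (i - 1) - 1) (vsi lam (r + 1) i)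
                  / F (hsi lam r i - 1) (vsi lam (r + 1) i)) *
     (F 0 0 / F (hhi lam r - 1) 0)) *
    ((\<Prod>i=1..r-1. G (hsi lam i (r - 1)) (vsi lam (i + 1) r - 1)
                  / G (hsi lam i (r - 1)) (vsi lam i r - 1)) *
     (G 0 0 / G 0 (vsi lam r r - 1)))"
proof -
  interpret one_cell_extension "lminus lam r" lam "U r" "W r"
    using one_cell_extension_lminus[OF r] .
  have U_r: "U (Suc r) < U r" "1 \<le> U r"
    using uu_strict_antimono[of r "Suc r"] uu_pos[of r] r by auto
  have W_r: "W (r - 1) < W r"
    using W_strict_mono[of "r - 1" r] r by simp
  let ?f = "\<lambda>x. F (int (U r - 1 - x)) (int (conjugate lam x - W r))
                / F (int (Suc (U r - 1) - x)) (int (conjugate lam x - W r))"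
  let ?g = "\<lambda>y. G (int (row lam y - U r)) (int (W r - 1 - y))
                / G (int (row lam y - U r)) (int (Suc (W r - 1) - y))"
  have "alpha_gen F G lam (lminus lam r) =
      (\<Prod>x\<in>{0<..U r - 1}. ?f x) * (\<Prod>y\<in>{0<..W r - 1}. ?g y)"
    unfolding alpha_gen_eq using U_r row_lminus[OF r]
    by (intro arg_cong2[where f = times] prod.cong) (auto simp: conjugate_rho)
  also have "(\<Prod>x\<in>{0<..U r - 1}. ?f x)
      = (\<Prod>x\<in>{0<..U (Suc r)}. ?f x) * (\<Prod>x\<in>{U (Suc r)<..U r - 1}. ?f x)"
    using U_r by (intro prod_greaterThanAtMost_split) auto
  also have "(\<Prod>x\<in>{0<..U (Suc r)}. ?f x)
      = (\<Prod>i=r+1..d. F (hsi lam r (i - 1) - 1) (vsi lam (r + 1) i)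
                    / F (hsi lam r i - 1) (vsi lam (r + 1) i))"
    using r U_r W_mono hsi_eq[of r] vsi_eq[of "Suc r"]
    by (subst prod_leg_ratios_telescope[OF F])
       (auto simp: of_nat_diff diff_diff_eq add.commute intro!: prod.cong)
  also have "(\<Prod>x\<in>{U (Suc r)<..U r - 1}. ?f x) = F 0 0 / F (hhi lam r - 1) 0"
  proof -
    have "(\<Prod>x\<in>{U (Suc r)<..U r - 1}. ?f x)
        = (\<Prod>x\<in>{U (Suc r)<..U r - 1}.
             F (int (U r - 1 - x)) 0 / F (int (U r - 1 - (x - 1))) 0)"
      using conjugate_eq_W[of r] r U_r by (intro prod.cong) auto
    also have "\<dots> = F (int (U r - 1 - (U r - 1))) 0 / F (int (U r - 1 - U (Suc r))) 0"
      by (rule prod_telescope_greaterThanAtMost[where f = "\<lambda>x. F (int (U r - 1 - x)) 0"])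
         (use F U_r in auto)
    also have "\<dots> = F 0 0 / F (hhi lam r - 1) 0"
      using hhi_eq[OF r] U_r by (simp add: of_nat_diff diff_diff_eq add.commute)
    finally show ?thesis .
  qed
  also have "(\<Prod>y\<in>{0<..W r - 1}. ?g y)
      = (\<Prod>y\<in>{0<..W (r - 1)}. ?g y) * (\<Prod>y\<in>{W (r - 1)<..W r - 1}. ?g y)"
    using W_r by (intro prod_greaterThanAtMost_split) auto
  also have "(\<Prod>y\<in>{0<..W (r - 1)}. ?g y)
      = (\<Prod>i=1..r-1. G (hsi lam i (r - 1)) (vsi lam (i + 1) r - 1)
                    / G (hsi lam i (r - 1)) (vsi lam i r - 1))"
    using r W_r uu_strict_antimono[of _ r] hsi_eq[of _ "r - 1"] vsi_eq[of _ r]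
    by (subst prod_arm_ratios_telescope[OF G])
       (auto simp: of_nat_diff diff_diff_eq add.commute intro!: prod.cong less_imp_le)
  also have "(\<Prod>y\<in>{W (r - 1)<..W r - 1}. ?g y) = G 0 0 / G 0 (vsi lam r r - 1)"
  proof -
    have "(\<Prod>y\<in>{W (r - 1)<..W r - 1}. ?g y)
        = (\<Prod>y\<in>{W (r - 1)<..W r - 1}.
             G 0 (int (W r - 1 - y)) / G 0 (int (W r - 1 - (y - 1))))"
      using row_eq_uu[of r] r W_r by (intro prod.cong) auto
    also have "\<dots> = G 0 (int (W r - 1 - (W r - 1))) / G 0 (int (W r - 1 - W (r - 1)))"
      by (rule prod_telescope_greaterThanAtMost[where f = "\<lambda>y. G 0 (int (W r - 1 - y))"])
         (use G W_r in auto)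
    also have "\<dots> = G 0 0 / G 0 (vsi lam r r - 1)"
      using vsi_eq[of r r] r W_r by (simp add: of_nat_diff diff_diff_eq add.commute)
    finally show ?thesis .
  qed
  finally show ?thesis .
qed

lemma alpha_s_eq:
  fixes q t :: "'a::field"
  assumes generic: "\<forall>a b :: int. q powi a * t powi b = 1 \<longrightarrow> a = 0 \<and> b = 0" and s: "s \<le> d"
  shows "alpha_s q t lam s =
        (\<Prod>i=1..s. br q t (hsi lam i s) (vsi lam (i + 1) s) / br q t (hsi lam i s) (vsi lam i s)) *
        (\<Prod>i=s+1..nd lam. br q t (hsi lam (s + 1) (i - 1)) (vsi lam (s + 1) i)
                            / br q t (hsi lam (s + 1) i) (vsi lam (s + 1) i))"
  unfolding alpha_s_def alpha_eq_alpha_gen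
  by (subst alpha_gen_lplus[OF _ _ s]) (auto intro!: br_nonzero[OF generic] simp: mult.commute)

lemma alphabar_s_eq:
  fixes q t :: "'a::field"
  assumes generic: "\<forall>a b :: int. q powi a * t powi b = 1 \<longrightarrow> a = 0 \<and> b = 0" and s: "s \<le> d"
  shows "alphabar_s q t lam s =
        (\<Prod>i=1..s. brm q t (hsi lam i s) (vsi lam (i + 1) s) / brm q t (hsi lam i s) (vsi lam i s)) *
        (\<Prod>i=s+1..nd lam. brp q t (hsi lam (s + 1) (i - 1)) (vsi lam (s + 1) i)
                            / brp q t (hsi lam (s + 1) i) (vsi lam (s + 1) i))"
  unfolding alphabar_s_def alphabar_eq_alpha_gen
  by (subst alpha_gen_lplus[OF _ _ s])
     (auto intro!: br_nonzero[OF generic] simp: brp_def brm_def mult.commute)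

lemma beta_r_eq:
  fixes q t :: "'a::field"
  assumes generic: "\<forall>a b :: int. q powi a * t powi b = 1 \<longrightarrow> a = 0 \<and> b = 0" and r: "1 \<le> r" "r \<le> d"
  shows "beta_r q t lam r =
        (\<Prod>i=1..r-1. brp q t (hsi lam i (r - 1)) (vsi lam i r) / brp q t (hsi lam i (r - 1)) (vsi lam (i + 1) r)) *
        (brp q t 0 (vsi lam r r) / brp q t 0 1) * (brm q t (hhi lam r) 0 / brm q t 1 0) *
        (\<Prod>i=r+1..nd lam. brm q t (hsi lam r i) (vsi lam (r + 1) i) / brm q t (hsi lam r (i - 1)) (vsi lam (r + 1) i))"
  unfolding beta_r_def beta_def alpha_eq_alpha_gen
  by (subst alpha_gen_lminus[OF _ _ r])
     (auto intro!: br_nonzero[OF generic] simp: brp_def brm_def prod_dividef mult_ac)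

lemma betabar_r_eq:
  fixes q t :: "'a::field"
  assumes generic: "\<forall>a b :: int. q powi a * t powi b = 1 \<longrightarrow> a = 0 \<and> b = 0" and r: "1 \<le> r" "r \<le> d"
  shows "betabar_r q t lam r =
        (\<Prod>i=1..r-1. br q t (hsi lam i (r - 1)) (vsi lam i r) / br q t (hsi lam i (r - 1)) (vsi lam (i + 1) r)) *
        (br q t 0 (vsi lam r r) / br q t 0 1) * (br q t (hhi lam r) 0 / br q t 1 0) *
        (\<Prod>i=r+1..nd lam. br q t (hsi lam r i) (vsi lam (r + 1) i) / br q t (hsi lam r (i - 1)) (vsi lam (r + 1) i))"
  unfolding betabar_r_def betabar_def alphabar_eq_alpha_gen
  by (subst alpha_gen_lminus[OF _ _ r])
     (auto intro!: br_nonzero[OF generic] simp: prod_dividef mult_ac)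

lemma gamma_rs_eq:
  fixes q t :: "'a::field"
  assumes "q \<noteq> 0" "t \<noteq> 0" and r: "1 \<le> r" "r \<le> d" and s: "s \<le> d"
  shows "gamma_rs q t lam r s =
        (if r \<le> s then gammap q t lam r s
         else gammap q t lam r s * q powi (-1 - 2 * (hsi lam (s + 1) (r - 1)))
                * t powi (1 - 2 * (vsi lam (s + 1) r)))"
proof -
  have gamma: "gamma_rs q t lam r s =
      br q t (int (U r) - 1 - int (U (Suc s))) (int (W s) - int (W r) + 1) *
      br q t (int (U r) - int (U (Suc s))) (int (W s) - int (W r)) / ((1 - q) * (1 - t))"
    unfolding gamma_rs_def gamma_def gA_gB_eq[OF r s] by (simp add: br_def)
  show ?thesis
  proof (cases "r \<le> s")
    case True
    define H where "H = hsi lam r s"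
    define V where "V = vsi lam (r + 1) s"
    have H: "int (U r) = int (U (Suc s)) + H" and V: "int (W s) = int (W r) + V"
      using hsi_eq[of r s] vsi_eq[of "Suc r" s] r s True by (simp_all add: H_def V_def)
    have "gamma_rs q t lam r s = br q t (H - 1) (V + 1) * br q t H V / ((1 - q) * (1 - t))"
      unfolding gamma H V by (simp add: algebra_simps)
    then show ?thesis
      using True r by (simp add: gammap_def H_def V_def brm_def br_def mult_ac)
  next
    case False
    define H where "H = hsi lam (s + 1) (r - 1)"
    define V where "V = vsi lam (s + 1) r"
    have H: "int (U r) = int (U (Suc s)) - H" and V: "int (W r) = int (W s) + V"
      using hsi_eq[of "Suc s" "r - 1"] vsi_eq[of "Suc s" r] r s False by (simp_all add: H_def V_def)
    have "gamma_rs q t lam r s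
        = br q t (- (H + 1)) (- (V - 1)) * br q t (- H) (- V) / ((1 - q) * (1 - t))"
      unfolding gamma H V by (simp add: algebra_simps)
    also have "\<dots> = br q t H V * br q t (H + 1) (V - 1) / ((1 - q) * (1 - t))
                     * ((q powi (- (H + 1)) * q powi (- H)) * (t powi (- (V - 1)) * t powi (- V)))"
      unfolding br_uminus[OF assms(1,2)] by (simp add: mult_ac)
    also have "q powi (- (H + 1)) * q powi (- H) = q powi (- 1 - 2 * H)"
      using power_int_add[of q "- (H + 1)" "- H"] assms(1) by (simp add: algebra_simps)
    also have "t powi (- (V - 1)) * t powi (- V) = t powi (1 - 2 * V)"
      using power_int_add[of t "- (V - 1)" "- V"] assms(2) by (simp add: algebra_simps)
    finally show ?thesis
      using False by (simp add: gammap_def H_def V_def brp_def br_def algebra_simps)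
  qed
qed

lemma t_powi_div_gamma_rs:
  fixes q t :: "'a::field"
  assumes qt: "q \<noteq> 0" "t \<noteq> 0" and r: "1 \<le> r" "r \<le> d" and s: "s \<le> d"
  shows "t powi (gB (lplus lam s) lam (lminus lam r) - 1) / gamma_rs q t lam r s
         = tau q t lam r s / gammap q t lam r s"
proof (cases "r \<le> s")
  case True
  then show ?thesis
    using gA_gB_eq(2)[OF r s] gamma_rs_eq[OF qt r s] vsi_eq[of "Suc r" s] r
    by (simp add: tau_def)
next
  case False
  define H where "H = hsi lam (s + 1) (r - 1)"
  define V where "V = vsi lam (s + 1) r"
  have exp: "gB (lplus lam s) lam (lminus lam r) - 1 = - V"
    using gA_gB_eq(2)[OF r s] vsi_eq[of "Suc s" r] False by (simp add: V_def)
  define K where "K = q powi (-1 - 2 * H) * t powi (1 - 2 * V)"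
  have gamma: "gamma_rs q t lam r s = gammap q t lam r s * K"
    using gamma_rs_eq[OF qt r s] False by (simp add: K_def H_def V_def mult.assoc)
  have tau: "tau q t lam r s = q powi (1 + 2 * H) * t powi (-1 + V)"
    using False by (simp add: tau_def H_def V_def)
  have "t powi (- V) = tau q t lam r s * K"
    using qt unfolding tau K_def by (simp add: mult_ac power_int_add[symmetric])
  moreover have "K \<noteq> 0"
    using qt by (simp add: K_def)
  ultimately show ?thesis
    unfolding exp gamma by simp
qed

lemma p_rs_eq:
  fixes q t :: "'a::field"
  assumes qt: "q \<noteq> 0" "t \<noteq> 0" and r: "r \<le> d" and s: "s \<le> d"
  shows "p_rs q t lam r s =
        (if r = 0 then t powi (vsi lam 1 s) * alpha_s q t lam s
         else tau q t lam r s * (alpha_s q t lam s * beta_r q t lam r) / gammap q t lam r s)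
    \<and> pbar_rs q t lam r s =
        (if r = 0 then t powi (vsi lam 1 s) * alphabar_s q t lam s
         else tau q t lam r s * (alphabar_s q t lam s * betabar_r q t lam r) / gammap q t lam r s)"
proof (cases "r = 0")
  case True
  then show ?thesis
    using nn_lplus[OF s]
    by (simp add: p_rs_def pbar_rs_def Pup0_def Pbar0_def alpha_s_def alphabar_s_def vsi_def)
next
  case False
  have "t powi (gB (lplus lam s) lam (lminus lam r) - 1) * a * b / gamma_rs q t lam r s
        = tau q t lam r s * (a * b) / gammap q t lam r s" for a b :: 'a
  proof -
    have "t powi (gB (lplus lam s) lam (lminus lam r) - 1) * a * b / gamma_rs q t lam r s
        = t powi (gB (lplus lam s) lam (lminus lam r) - 1) / gamma_rs q t lam r s * (a * b)"
      by (simp add: field_simps)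
    then show ?thesis
      using t_powi_div_gamma_rs[OF qt _ r s] False by simp
  qed
  then show ?thesis
    using False
    by (simp add: p_rs_def pbar_rs_def Pup_def Pbar_def gamma_rs_def alpha_s_def alphabar_s_def
        beta_r_def betabar_r_def)
qed

end

theorem proposition4p17:
  fixes q t :: "'a::field" and lam :: "nat list"
  assumes "is_partition lam"
    and "q \<noteq> 0" and "t \<noteq> 0"
    and generic: "\<forall>a b :: int. q powi a * t powi b = 1 \<longrightarrow> a = 0 \<and> b = 0"
  shows
   "(\<forall>s \<in> {0..nd lam}.
      alpha_s q t lam s =
        (\<Prod>i=1..s. br q t (hsi lam i s) (vsi lam (i + 1) s) / br q t (hsi lam i s) (vsi lam i s)) *
        (\<Prod>i=s+1..nd lam. br q t (hsi lam (s + 1) (i - 1)) (vsi lam (s + 1) i)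
                            / br q t (hsi lam (s + 1) i) (vsi lam (s + 1) i))
    \<and> alphabar_s q t lam s =
        (\<Prod>i=1..s. brm q t (hsi lam i s) (vsi lam (i + 1) s) / brm q t (hsi lam i s) (vsi lam i s)) *
        (\<Prod>i=s+1..nd lam. brp q t (hsi lam (s + 1) (i - 1)) (vsi lam (s + 1) i)
                            / brp q t (hsi lam (s + 1) i) (vsi lam (s + 1) i)))
  \<and> (\<forall>r \<in> {1..nd lam}.
      beta_r q t lam r =
        (\<Prod>i=1..r-1. brp q t (hsi lam i (r - 1)) (vsi lam i r) / brp q t (hsi lam i (r - 1)) (vsi lam (i + 1) r)) *
        (brp q t 0 (vsi lam r r) / brp q t 0 1) * (brm q t (hhi lam r) 0 / brm q t 1 0) *
        (\<Prod>i=r+1..nd lam. brm q t (hsi lam r i) (vsi lam (r + 1) i) / brm q t (hsi lam r (i - 1)) (vsi lam (r + 1) i))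
    \<and> betabar_r q t lam r =
        (\<Prod>i=1..r-1. br q t (hsi lam i (r - 1)) (vsi lam i r) / br q t (hsi lam i (r - 1)) (vsi lam (i + 1) r)) *
        (br q t 0 (vsi lam r r) / br q t 0 1) * (br q t (hhi lam r) 0 / br q t 1 0) *
        (\<Prod>i=r+1..nd lam. br q t (hsi lam r i) (vsi lam (r + 1) i) / br q t (hsi lam r (i - 1)) (vsi lam (r + 1) i)))
  \<and> (\<forall>r \<in> {1..nd lam}. \<forall>s \<in> {0..nd lam}.
      gamma_rs q t lam r s =
        (if r \<le> s then gammap q t lam r s
         else gammap q t lam r s * q powi (-1 - 2 * (hsi lam (s + 1) (r - 1)))
                * t powi (1 - 2 * (vsi lam (s + 1) r))))
  \<and> (\<forall>r \<in> {0..nd lam}. \<forall>s \<in> {0..nd lam}.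
      p_rs q t lam r s =
        (if r = 0 then t powi (vsi lam 1 s) * alpha_s q t lam s
         else tau q t lam r s * (alpha_s q t lam s * beta_r q t lam r) / gammap q t lam r s)
    \<and> pbar_rs q t lam r s =
        (if r = 0 then t powi (vsi lam 1 s) * alphabar_s q t lam s
         else tau q t lam r s * (alphabar_s q t lam s * betabar_r q t lam r) / gammap q t lam r s))"
proof -
  interpret partition_shape lam
    using assms(1) by (rule partition_shape.intro)
  show ?thesis
    using alpha_s_eq[OF generic] alphabar_s_eq[OF generic] beta_r_eq[OF generic]
      betabar_r_eq[OF generic] gamma_rs_eq[OF assms(2,3)] p_rs_eq[OF assms(2,3)]
    by auto
qed

end
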